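(* Suppose the Tanner graph of $\mathcal H$ is a tree. Then $\bar{\mathcal Q}(\mathcal H)=\{f:\exists\,w\text{ with }(f,w)\in\mathcal Q(\mathcal H)\}$ equals $\mathcal K(\mathcal C)$, the convex hull of $\{\Xi(c):c\in\mathcal C\}$ in $\mathbb R^{(q-1)n}$.
   Context: Let $R$ be a finite ring with $q$ elements, $R^-=R\setminus\{0\}$, $\mathcal H$ an $m\times n$ matrix over $R$, $\mathcal C=\{c\in R^n:c\mathcal H^T=0\}$, $\mathcal I=\{1,\dots,n\}$, $\mathcal J=\{1,\dots,m\}$, $\mathcal I_j=\{i:\mathcal H_{j,i}\ne0\}$, $\mathcal C_j=\{b\in R^{\mathcal I_j}:\sum_{i\in\mathcal I_j}b_i\mathcal H_{j,i}=0\}$. The Tanner graph of $\mathcal H$ is the bipartite graph on variable vertices $u_1,\dots,u_n$ and check vertices $v_1,\dots,v_m$ with an edge $u_iv_j$ iff $\mathcal H_{j,i}\ne0$. Let $\xi:R\to\{0,1\}^{q-1}$ (coordinates indexed by $R^-$), $\xi(a)^{(\gamma)}=1$ iff $\gamma=a$, and $\Xi(c)=(\xi(c_1)\mid\cdots\mid\xi(c_n))$; coordinates of $f\in\mathbb R^{(q-1)n}$ are $f_i^{(\alpha)}$. $\mathcal Q(\mathcal H)$ is the set of $(f,w)$, $w=(w_{j,b})_{j\in\mathcal J,b\in\mathcal C_j}$, with $w_{j,b}\ge0$, $\sum_{b\in\mathcal C_j}w_{j,b}=1$ for each $j$, and $f_i^{(\alpha)}=\sum_{b\in\mathcal C_j,b_i=\alpha}w_{j,b}$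 for all $j$, $i\in\mathcal I_j$, $\alpha\in R^-$. *)

theory Defs
  imports "HOL-Analysis.Analysis"
begin

text \<open>Parity-check matrix H: rows indexed by the finite type 'm (check indices J),
columns by the finite type 'n (variable indices I); entries in a finite ring 'r.
H j i is the entry H_{j,i}.\<close>

definition tanner_adj :: "('m \<Rightarrow> 'n \<Rightarrow> 'r::zero) \<Rightarrow> ('n + 'm) \<Rightarrow> ('n + 'm) \<Rightarrow> bool" where
  "tanner_adj H x y \<longleftrightarrow>
     (\<exists>i j. ((x = Inl i \<and> y = Inr j) \<or> (x = Inr j \<and> y = Inl i)) \<and> H j i \<noteq> 0)"

definition graph_connected :: "('v \<Rightarrow> 'v \<Rightarrow> bool) \<Rightarrow> bool" where
  "graph_connected E \<longleftrightarrow> (\<forall>x y. E\<^sup>*\<^sup>* x y)"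

definition graph_has_cycle :: "('v \<Rightarrow> 'v \<Rightarrow> bool) \<Rightarrow> bool" where
  "graph_has_cycle E \<longleftrightarrow>
     (\<exists>vs. length vs \<ge> 3 \<and> distinct vs \<and>
        (\<forall>k < length vs - 1. E (vs ! k) (vs ! Suc k)) \<and> E (last vs) (hd vs))"

definition graph_is_tree :: "('v \<Rightarrow> 'v \<Rightarrow> bool) \<Rightarrow> bool" where
  "graph_is_tree E \<longleftrightarrow> graph_connected E \<and> \<not> graph_has_cycle E"

definition code :: "('m \<Rightarrow> 'n::finite \<Rightarrow> 'r::ring_1) \<Rightarrow> ('n \<Rightarrow> 'r) set" where
  "code H = {c. \<forall>j. (\<Sum>i\<in>UNIV. c i * H j i) = 0}"

definition supp_row :: "('m \<Rightarrow> 'n \<Rightarrow> 'r::zero) \<Rightarrow> 'm \<Rightarrow> 'n set" where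
  "supp_row H j = {i. H j i \<noteq> 0}"

text \<open>Local code C_j \<subseteq> R^{I_j}; a word b \<in> R^{I_j} is represented by the function
that is b on I_j and 0 outside I_j.\<close>
definition local_code :: "('m \<Rightarrow> 'n::finite \<Rightarrow> 'r::ring_1) \<Rightarrow> 'm \<Rightarrow> ('n \<Rightarrow> 'r) set" where
  "local_code H j = {b. (\<forall>i. i \<notin> supp_row H j \<longrightarrow> b i = 0) \<and>
                         (\<Sum>i\<in>supp_row H j. b i * H j i) = 0}"

text \<open>R^{(q-1)n} is represented by the subspace of real^('n \<times> 'r) whose
coordinates (i,0) vanish; coordinate (i,\<alpha>) with \<alpha> \<noteq> 0 is f_i^{(\<alpha>)}.\<close>
definition Xi :: "('n::finite \<Rightarrow> 'r::{zero,finite}) \<Rightarrow> real ^ ('n \<times> 'r)" where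
  "Xi c = (\<chi> p. if snd p \<noteq> 0 \<and> c (fst p) = snd p then 1 else 0)"

definition polytope_Q :: "('m \<Rightarrow> 'n::finite \<Rightarrow> 'r::{ring_1,finite})
      \<Rightarrow> ((real ^ ('n \<times> 'r)) \<times> ('m \<Rightarrow> ('n \<Rightarrow> 'r) \<Rightarrow> real)) set" where
  "polytope_Q H = {(f, w).
     (\<forall>i. (f $ (i, 0)) = 0) \<and>
     (\<forall>j. \<forall>b\<in>local_code H j. w j b \<ge> 0) \<and>
     (\<forall>j. (\<Sum>b\<in>local_code H j. w j b) = 1) \<and>
     (\<forall>j. \<forall>i\<in>supp_row H j. \<forall>\<alpha>. \<alpha> \<noteq> 0 \<longrightarrow>
         (f $ (i, \<alpha>)) = (\<Sum>b\<in>{b\<in>local_code H j. b i = \<alpha>}. w j b))}"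

definition polytope_Qbar :: "('m \<Rightarrow> 'n::finite \<Rightarrow> 'r::{ring_1,finite}) \<Rightarrow> (real ^ ('n \<times> 'r)) set" where
  "polytope_Qbar H = {f. \<exists>w. (f, w) \<in> polytope_Q H}"

end

theory Submission
  imports Defs
begin

text \<open>For \<open>(f, w) \<in> \<Q>(\<H>)\<close> the weights \<open>w\<^sub>j\<close> are probability distributions on the local codes
  \<open>\<C>\<^sub>j\<close>, and their single-variable marginals are read off from \<open>f\<close>, so they agree wherever
  two checks share a variable. If the Tanner graph is a tree, every nonempty set of checks contains
  one that shares at most one variable with the others. Removing such checks one at a time and
  gluing each back as a conditionally independent coupling over its single shared variable yields a
  distribution \<open>P\<close> on \<open>R\<^sup>n\<close> whose marginal on each \<open>\<I>\<^sub>j\<close> is \<open>w\<^sub>j\<close>. Such a \<open>P\<close> is supported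
  on the code, and \<open>f\<close> is the \<open>P\<close>-mean of \<open>\<Xi>\<close>. The other inclusion holds because \<open>\<Q>\<close> is convex and
  contains \<open>\<Xi>(c)\<close> for every codeword \<open>c\<close>.\<close>

text \<open>Words in \<open>R\<^sup>S\<close> are represented, as for the local codes, by functions vanishing outside \<open>S\<close>;
  \<open>project S\<close> is the restriction map and \<open>marginal S P\<close> the push-forward of \<open>P\<close> along it.\<close>

definition project :: "'n set \<Rightarrow> ('n \<Rightarrow> 'r::zero) \<Rightarrow> 'n \<Rightarrow> 'r" where
  "project S c = (\<lambda>i. if i \<in> S then c i else 0)"

definition marginal :: "'n set \<Rightarrow> (('n::finite \<Rightarrow> 'r::{zero,finite}) \<Rightarrow> real) \<Rightarrow> ('n \<Rightarrow> 'r) \<Rightarrow> real" where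
  "marginal S P b = (\<Sum>c\<in>UNIV. if project S c = b then P c else 0)"

definition supported_on :: "'n set \<Rightarrow> (('n \<Rightarrow> 'r::zero) \<Rightarrow> real) \<Rightarrow> bool" where
  "supported_on S P \<longleftrightarrow> (\<forall>c. P c \<noteq> 0 \<longrightarrow> project S c = c)"

lemma project_project: "A \<subseteq> B \<Longrightarrow> project A (project B c) = project A c"
  by (auto simp: project_def fun_eq_iff)

lemma project_idem [simp]: "project A (project A c) = project A c"
  by (simp add: project_project)

lemma project_empty [simp]: "project {} c = (\<lambda>_. 0)"
  by (simp add: project_def)

lemma not_in_range_project: "project S b \<noteq> b \<Longrightarrow> project S c \<noteq> b"
  by (metis project_idem)

lemma sum_if_marginal:
  "(\<Sum>b\<in>UNIV. if R b then marginal S P b else 0) = (\<Sum>c\<in>UNIV. if R (project S c) then P c else 0)"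
proof -
  have "(\<Sum>b\<in>UNIV. if R b then marginal S P b else 0)
      = (\<Sum>b\<in>UNIV. \<Sum>c\<in>UNIV. if project S c = b then (if R b then P c else 0) else 0)"
    unfolding marginal_def by (intro sum.cong refl) (auto intro: sum.neutral sum.cong)
  also have "\<dots> = (\<Sum>c\<in>UNIV. \<Sum>b\<in>UNIV. if project S c = b then (if R b then P c else 0) else 0)"
    by (rule sum.swap)
  finally show ?thesis by (simp add: sum.delta)
qed

lemma marginal_marginal:
  assumes "A \<subseteq> B"
  shows "marginal A (marginal B P) = marginal A P"
  by (rule ext) (simp add: marginal_def[of A] sum_if_marginal project_project[OF assms])

lemma sum_marginal: "sum (marginal S P) UNIV = sum P UNIV"
  using sum_if_marginal[of "\<lambda>_. True" S P] by simp

lemma marginal_nonneg: "(\<And>c. 0 \<le> P c) \<Longrightarrow> 0 \<le> marginal S P b"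
  unfolding marginal_def by (intro sum_nonneg) auto

lemma le_marginal_project:
  assumes "\<And>c. 0 \<le> P c"
  shows "P c \<le> marginal S P (project S c)"
  unfolding marginal_def
  using member_le_sum[of c UNIV "\<lambda>c'. if project S c' = project S c then P c' else 0"] assms
  by auto

lemma marginal_empty: "marginal {} P = (\<lambda>b. if b = (\<lambda>_. 0) then sum P UNIV else 0)"
proof
  fix b show "marginal {} P b = (if b = (\<lambda>_. 0) then sum P UNIV else 0)"
    by (cases "b = (\<lambda>_. 0)") (auto simp: marginal_def)
qed

lemma sum_extensions_project:
  assumes d: "project U d = d" and sQ: "supported_on S Q"
  shows "(\<Sum>c\<in>{c. project U c = d \<and> project (U \<union> S) c = c}. Q (project S c))
       = marginal (U \<inter> S) Q (project (U \<inter> S) d)"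
proof -
  let ?t = "project (U \<inter> S) d"
  let ?E = "{e. project S e = e \<and> project (U \<inter> S) e = ?t}"
  have "(\<Sum>c\<in>{c. project U c = d \<and> project (U \<union> S) c = c}. Q (project S c)) = sum Q ?E"
  proof (rule sum.reindex_bij_witness[where j = "project S" and i = "\<lambda>e x. if x \<in> U then d x else e x"])
    fix c assume "c \<in> {c. project U c = d \<and> project (U \<union> S) c = c}"
    then have c: "project U c = d" "project (U \<union> S) c = c" by auto
    show "(\<lambda>x. if x \<in> U then d x else project S c x) = c"
      using c by (auto simp: project_def fun_eq_iff) metis+
    show "project S c \<in> ?E"
      using c by (auto simp: project_def fun_eq_iff) metis+
  next
    fix e assume "e \<in> ?E"
    then have e: "project S e = e" "project (U \<inter> S) e = ?t" by auto
    show "project S (\<lambda>x. if x \<in> U then d x else e x) = e"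
      using e by (auto simp: project_def fun_eq_iff) metis+
    show "(\<lambda>x. if x \<in> U then d x else e x) \<in> {c. project U c = d \<and> project (U \<union> S) c = c}"
      using d e by (auto simp: project_def fun_eq_iff) metis+
  qed simp
  also have "\<dots> = marginal (U \<inter> S) Q ?t"
    unfolding marginal_def using sQ
    by (subst sum.If_cases) (auto simp: supported_on_def intro!: sum.mono_neutral_cong_left)
  finally show ?thesis .
qed

lemma sum_value_mass:
  fixes P :: "('n::finite \<Rightarrow> 'r::finite) \<Rightarrow> 'a::comm_monoid_add"
  shows "(\<Sum>\<alpha>\<in>UNIV. \<Sum>c\<in>UNIV. if c i = \<alpha> then P c else 0) = sum P UNIV"
  by (subst sum.swap) (simp add: sum.delta')

lemma value_mass_marginal:
  assumes "i \<in> S"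
  shows "(\<Sum>b\<in>UNIV. if b i = \<alpha> then marginal S P b else 0) = (\<Sum>c\<in>UNIV. if c i = \<alpha> then P c else 0)"
  using assms by (simp add: sum_if_marginal project_def)

lemma marginal_singleton:
  "marginal {i} P b = (if project {i} b = b then (\<Sum>c\<in>UNIV. if c i = b i then P c else 0) else 0)"
proof (cases "project {i} b = b")
  case True
  then have "project {i} c = b \<longleftrightarrow> c i = b i" for c
    by (auto simp: project_def fun_eq_iff) metis+
  with True show ?thesis by (simp add: marginal_def)
qed (simp add: marginal_def not_in_range_project)

text \<open>The pseudocodeword \<open>f\<close> records only the masses of nonzero symbols; the mass of \<open>0\<close> is
  recovered from the total mass.\<close>

lemma marginal_singleton_eqI:
  fixes P Q :: "('n::finite \<Rightarrow> 'r::{zero,finite}) \<Rightarrow> real"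
  assumes total: "sum P UNIV = sum Q UNIV"
    and nonzero: "\<And>\<alpha>. \<alpha> \<noteq> 0 \<Longrightarrow>
      (\<Sum>c\<in>UNIV. if c i = \<alpha> then P c else 0) = (\<Sum>c\<in>UNIV. if c i = \<alpha> then Q c else 0)"
  shows "marginal {i} P = marginal {i} Q"
proof -
  let ?m = "\<lambda>P \<alpha>. \<Sum>c\<in>UNIV. if c i = \<alpha> then P c else 0"
  have zero: "?m R 0 = sum R UNIV - sum (?m R) (UNIV - {0})" for R :: "('n \<Rightarrow> 'r) \<Rightarrow> real"
    using sum_value_mass[of i R] sum.remove[of UNIV 0 "?m R"] by simp
  have "sum (?m P) (UNIV - {0}) = sum (?m Q) (UNIV - {0})"
    by (rule sum.cong[OF refl], rule nonzero) simp
  with total zero[of P] zero[of Q] have "?m P \<alpha> = ?m Q \<alpha>" for \<alpha>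
    using nonzero by (cases "\<alpha> = 0") auto
  then show ?thesis by (simp add: fun_eq_iff marginal_singleton)
qed

text \<open>The conditionally independent coupling of \<open>P\<close> on \<open>U\<close> and \<open>Q\<close> on \<open>S\<close> over the separator
  \<open>U \<inter> S\<close>. Where the separator mass vanishes the division yields \<open>0\<close>, which is harmless
  because \<open>P\<close> has the same separator marginal and thus vanishes there as well.\<close>

definition glue :: "'n set \<Rightarrow> 'n set \<Rightarrow> (('n::finite \<Rightarrow> 'r::{zero,finite}) \<Rightarrow> real)
      \<Rightarrow> (('n \<Rightarrow> 'r) \<Rightarrow> real) \<Rightarrow> ('n \<Rightarrow> 'r) \<Rightarrow> real" where
  "glue U S P Q c =
     (if project (U \<union> S) c = c
      then P (project U c) * Q (project S c) / marginal (U \<inter> S) Q (project (U \<inter> S) c)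
      else 0)"

lemma glue_nonneg:
  assumes "\<And>c. 0 \<le> P c" and "\<And>c. 0 \<le> Q c"
  shows "0 \<le> glue U S P Q c"
  using assms marginal_nonneg[of Q] by (simp add: glue_def)

lemma supported_on_glue: "supported_on (U \<union> S) (glue U S P Q)"
  by (simp add: supported_on_def glue_def)

lemma glue_commute:
  assumes "marginal (U \<inter> S) P = marginal (U \<inter> S) Q"
  shows "glue U S P Q = glue S U Q P"
  using assms by (simp add: glue_def fun_eq_iff Int_commute Un_commute mult.commute)

lemma marginal_glue:
  assumes P0: "\<And>c. 0 \<le> P c" and sP: "supported_on U P" and sQ: "supported_on S Q"
    and sep: "marginal (U \<inter> S) P = marginal (U \<inter> S) Q"
  shows "marginal U (glue U S P Q) = P"
proof
  fix d
  show "marginal U (glue U S P Q) d = P d"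
  proof (cases "project U d = d")
    case False
    then show ?thesis
      using sP not_in_range_project[OF False] by (auto simp: marginal_def supported_on_def)
  next
    case True
    define M where "M = marginal (U \<inter> S) Q (project (U \<inter> S) d)"
    let ?C = "{c. project U c = d \<and> project (U \<union> S) c = c}"
    have sep_d: "project (U \<inter> S) c = project (U \<inter> S) d" if "project U c = d" for c
      using that project_project[of "U \<inter> S" U c] by auto
    have "marginal U (glue U S P Q) d = (\<Sum>c\<in>UNIV. if c \<in> ?C then P d * Q (project S c) / M else 0)"
      unfolding marginal_def by (intro sum.cong refl) (auto simp: glue_def M_def sep_d)
    also have "\<dots> = P d / M * (\<Sum>c\<in>?C. Q (project S c))"
      by (simp add: sum.If_cases sum_distrib_left)
    also have "\<dots> = P d / M * M"
      using sum_extensions_project[OF True sQ] by (simp add: M_def)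
    also have "\<dots> = P d"
    proof (cases "M = 0")
      case True
      have "P d \<le> marginal (U \<inter> S) P (project (U \<inter> S) d)"
        by (rule le_marginal_project[OF P0])
      with True sep P0[of d] have "P d = 0" by (simp add: M_def)
      then show ?thesis by simp
    qed simp
    finally show ?thesis .
  qed
qed

lemma coupling_exists:
  assumes P0: "\<And>c. 0 \<le> P c" and sP: "supported_on U P" and P1: "sum P UNIV = 1"
    and Q0: "\<And>c. 0 \<le> Q c" and sQ: "supported_on S Q"
    and sep: "marginal (U \<inter> S) P = marginal (U \<inter> S) Q"
  shows "\<exists>G. (\<forall>c. 0 \<le> G c) \<and> supported_on (U \<union> S) G \<and> sum G UNIV = 1
             \<and> marginal U G = P \<and> marginal S G = Q"
proof (intro exI conjI allI)
  show G_U: "marginal U (glue U S P Q) = P"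
    by (rule marginal_glue[OF P0 sP sQ sep])
  show "marginal S (glue U S P Q) = Q"
    unfolding glue_commute[OF sep]
    by (rule marginal_glue[OF Q0 sQ sP]) (use sep in \<open>simp add: Int_commute\<close>)
  show "sum (glue U S P Q) UNIV = 1"
    using sum_marginal[of U "glue U S P Q"] G_U P1 by simp
qed (simp_all add: glue_nonneg P0 Q0 supported_on_glue)

lemma marginal_eq_if_card_le_one:
  assumes "card A \<le> 1" and "sum P UNIV = sum Q UNIV"
    and "\<And>i. i \<in> A \<Longrightarrow> marginal {i} P = marginal {i} Q"
  shows "marginal A P = marginal A Q"
proof (cases "A = {}")
  case False
  with \<open>card A \<le> 1\<close> obtain i where "A = {i}"
    using card_le_Suc0_iff_eq[of A] by auto
  with assms show ?thesis by simp
next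
  case True
  show ?thesis unfolding True marginal_empty assms(2) ..
qed

lemma joint_distribution_exists:
  fixes X :: "'m \<Rightarrow> 'n::finite set" and \<mu> :: "'m \<Rightarrow> ('n \<Rightarrow> 'r::{zero,finite}) \<Rightarrow> real"
  assumes nonneg: "\<And>j c. 0 \<le> \<mu> j c" and supp: "\<And>j. supported_on (X j) (\<mu> j)"
    and total: "\<And>j. sum (\<mu> j) UNIV = 1"
    and consistent: "\<And>j j' i. i \<in> X j \<Longrightarrow> i \<in> X j' \<Longrightarrow> marginal {i} (\<mu> j) = marginal {i} (\<mu> j')"
    and leaf: "\<And>J. finite J \<Longrightarrow> J \<noteq> {} \<Longrightarrow> \<exists>j\<in>J. card (X j \<inter> (\<Union>k\<in>J - {j}. X k)) \<le> 1"
    and "finite J"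
  shows "\<exists>P. (\<forall>c. 0 \<le> P c) \<and> supported_on (\<Union>k\<in>J. X k) P \<and> sum P UNIV = 1
             \<and> (\<forall>j\<in>J. marginal (X j) P = \<mu> j)"
  using \<open>finite J\<close>
proof (induction J rule: finite_psubset_induct)
  case (psubset J)
  show ?case
  proof (cases "J = {}")
    case True
    let ?P = "\<lambda>c::'n \<Rightarrow> 'r. if c = (\<lambda>_. 0) then 1 else 0 :: real"
    show ?thesis
      using True by (intro exI[of _ ?P]) (auto simp: supported_on_def sum.delta')
  next
    case False
    then obtain j0 where j0: "j0 \<in> J" and sep: "card (X j0 \<inter> (\<Union>k\<in>J - {j0}. X k)) \<le> 1"
      using leaf psubset.hyps by blast
    define U where "U = (\<Union>k\<in>J - {j0}. X k)"
    obtain P where P0: "\<forall>c. 0 \<le> P c" and sP: "supported_on U P" and P1: "sum P UNIV = 1"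
      and mP: "\<forall>j\<in>J - {j0}. marginal (X j) P = \<mu> j"
      using psubset.IH[of "J - {j0}"] j0 unfolding U_def by blast
    have marg_P: "marginal {i} P = marginal {i} (\<mu> k)" if "k \<in> J - {j0}" "i \<in> X k" for k i
      using that mP marginal_marginal[of "{i}" "X k" P] by simp
    have sep_eq: "marginal (U \<inter> X j0) P = marginal (U \<inter> X j0) (\<mu> j0)"
    proof (rule marginal_eq_if_card_le_one)
      show "card (U \<inter> X j0) \<le> 1" using sep by (simp add: U_def Int_commute)
      show "sum P UNIV = sum (\<mu> j0) UNIV" using P1 total by simp
      show "marginal {i} P = marginal {i} (\<mu> j0)" if "i \<in> U \<inter> X j0" for i
      proof -
        from that obtain k where "k \<in> J - {j0}" "i \<in> X k" "i \<in> X j0" by (auto simp: U_def)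
        then show ?thesis using marg_P[of k i] consistent[of i k j0] by simp
      qed
    qed
    obtain G where G0: "\<forall>c. 0 \<le> G c" and sG: "supported_on (U \<union> X j0) G"
      and G1: "sum G UNIV = 1" and G_U: "marginal U G = P" and G_j0: "marginal (X j0) G = \<mu> j0"
      using coupling_exists[OF _ sP P1 nonneg supp sep_eq] P0 by blast
    have "marginal (X j) G = \<mu> j" if "j \<in> J" for j
    proof (cases "j = j0")
      case False
      with that have "X j \<subseteq> U" by (auto simp: U_def)
      then show ?thesis
        using G_U mP that False marginal_marginal[of "X j" U G] by simp
    qed (use G_j0 in simp)
    moreover have "U \<union> X j0 = (\<Union>k\<in>J. X k)" using j0 by (auto simp: U_def)
    ultimately show ?thesis using G0 sG G1 by metis
  qed
qed

lemma first_repetition: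
  fixes f :: "nat \<Rightarrow> 'v::finite"
  obtains k l where "k < l" "f k = f l" "inj_on f {k..<l}"
proof -
  have "\<not> inj f"
    using finite_imageD[of f UNIV] by auto
  then have ex: "\<exists>l. \<exists>k<l. f k = f l"
    unfolding inj_def by (metis linorder_neqE_nat)
  define l where "l = (LEAST l. \<exists>k<l. f k = f l)"
  obtain k where "k < l" "f k = f l"
    using LeastI_ex[OF ex] unfolding l_def by blast
  moreover have "inj_on f {k..<l}"
  proof (rule inj_onI)
    fix a b assume "a \<in> {k..<l}" "b \<in> {k..<l}" "f a = f b"
    then show "a = b"
      using not_less_Least[of a "\<lambda>l. \<exists>k<l. f k = f l"] not_less_Least[of b "\<lambda>l. \<exists>k<l. f k = f l"]
      unfolding l_def[symmetric] by (metis atLeastLessThan_iff linorder_neqE_nat)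
  qed
  ultimately show ?thesis using that by blast
qed

text \<open>An infinite walk in a finite loopless graph that never immediately returns to the vertex it
  just left contains a cycle: between the first repetition \<open>x k = x l\<close> the walk is a path, and
  it has at least three vertices because \<open>l = k + 1\<close> would be a loop and \<open>l = k + 2\<close> a return.\<close>

lemma nonbacktracking_walk_has_cycle:
  fixes x :: "nat \<Rightarrow> 'v::finite"
  assumes loopless: "\<And>a. \<not> E a a" and walk: "\<And>k. E (x k) (x (Suc k))"
    and nonbacktracking: "\<And>k. x (Suc (Suc k)) \<noteq> x k"
  shows "graph_has_cycle E"
proof -
  obtain k l where kl: "k < l" "x k = x l" and inj: "inj_on x {k..<l}"
    by (rule first_repetition)
  have "l \<noteq> Suc k" using loopless walk[of k] kl by metis
  moreover have "l \<noteq> Suc (Suc k)" using nonbacktracking[of k] kl by metis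
  ultimately have l3: "k + 3 \<le> l" using kl by linarith
  define vs where "vs = map x [k..<l]"
  have "length vs = l - k" by (simp add: vs_def)
  moreover have "distinct vs" using inj by (simp add: vs_def distinct_map)
  moreover have "\<forall>i < length vs - 1. E (vs ! i) (vs ! Suc i)"
    using walk by (simp add: vs_def add.commute)
  moreover have "last vs = x (l - 1)" and "hd vs = x k"
    using l3 by (simp_all add: vs_def last_map hd_map)
  then have "E (last vs) (hd vs)"
    using walk[of "l - 1"] l3 kl by simp
  ultimately show ?thesis
    unfolding graph_has_cycle_def using l3 by (intro exI[of _ vs]) auto
qed

lemma tanner_adj_simps [simp]:
  "tanner_adj H (Inr j) (Inl i) \<longleftrightarrow> H j i \<noteq> 0"
  "tanner_adj H (Inl i) (Inr j) \<longleftrightarrow> H j i \<noteq> 0"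
  "\<not> tanner_adj H a a"
  by (auto simp: tanner_adj_def)

lemma tanner_connected_column_nonzero:
  assumes "graph_connected (tanner_adj H)"
  shows "\<exists>j. H j i \<noteq> 0"
proof -
  have "(tanner_adj H)\<^sup>*\<^sup>* (Inl i) (Inr undefined)"
    using assms by (simp add: graph_connected_def)
  then show ?thesis
    by (cases rule: converse_rtranclpE) (auto simp: tanner_adj_def)
qed

lemma tanner_cycle_of_alternating_walk:
  fixes H :: "'m::finite \<Rightarrow> 'n::finite \<Rightarrow> 'r::zero"
  assumes "\<And>k. H (js k) (vs k) \<noteq> 0" "\<And>k. H (js (Suc k)) (vs k) \<noteq> 0"
    and "\<And>k. js (Suc k) \<noteq> js k" "\<And>k. vs (Suc k) \<noteq> vs k"
  shows "graph_has_cycle (tanner_adj H)"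
proof (rule nonbacktracking_walk_has_cycle)
  define x where "x n = (if even n then Inr (js (n div 2)) else Inl (vs (n div 2)))" for n
  show "tanner_adj H (x n) (x (Suc n))" for n
    using assms(1,2) by (cases "even n") (auto simp: x_def elim!: evenE oddE)
  show "x (Suc (Suc n)) \<noteq> x n" for n
    using assms(3,4)[of "n div 2"] by (cases "even n") (auto simp: x_def elim!: evenE oddE)
qed simp

text \<open>Otherwise every check shares a second variable with some other check, so a walk alternating
  between checks and shared variables can always continue without going back.\<close>

lemma acyclic_tanner_leaf_check:
  fixes H :: "'m::finite \<Rightarrow> 'n::finite \<Rightarrow> 'r::zero"
  assumes acyclic: "\<not> graph_has_cycle (tanner_adj H)" and "J \<noteq> {}"
  shows "\<exists>j\<in>J. card (supp_row H j \<inter> (\<Union>k\<in>J - {j}. supp_row H k)) \<le> 1"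
proof (rule ccontr)
  let ?S = "supp_row H"
  let ?step = "\<lambda>(j, v) (j', v'). j' \<noteq> j \<and> v' \<in> ?S j \<inter> ?S j' \<and> v' \<noteq> v"
  assume no_leaf: "\<not> ?thesis"
  have extend: "\<exists>p'. fst p' \<in> J \<and> ?step p p'" if "fst p \<in> J" for p
  proof -
    obtain j v where p: "p = (j, v)" by fastforce
    let ?A = "?S j \<inter> (\<Union>k\<in>J - {j}. ?S k)"
    have "\<not> card ?A \<le> 1" using no_leaf that p by auto
    then obtain v' where "v' \<in> ?A" "v' \<noteq> v"
      using card_le_Suc0_iff_eq[of ?A] by auto
    then obtain j' where "j' \<in> J" "j' \<noteq> j" "v' \<in> ?S j \<inter> ?S j'" by blast
    with \<open>v' \<noteq> v\<close> show ?thesis by (intro exI[of _ "(j', v')"]) (simp add: p)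
  qed
  have "\<exists>p. \<forall>k. fst (p k) \<in> J \<and> ?step (p k) (p (Suc k))"
  proof (rule dependent_nat_choice[where P = "\<lambda>_ p. fst p \<in> J" and Q = "\<lambda>_. ?step"])
    show "\<exists>p. fst p \<in> J" using \<open>J \<noteq> {}\<close> by auto
  qed (rule extend)
  then obtain p where p: "\<And>k. fst (p k) \<in> J \<and> ?step (p k) (p (Suc k))" by blast
  have "graph_has_cycle (tanner_adj H)"
  proof (rule tanner_cycle_of_alternating_walk[where js = "fst \<circ> p" and vs = "snd \<circ> p \<circ> Suc"])
    fix k
    show "H ((fst \<circ> p) k) ((snd \<circ> p \<circ> Suc) k) \<noteq> 0"
      and "H ((fst \<circ> p) (Suc k)) ((snd \<circ> p \<circ> Suc) k) \<noteq> 0"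
      and "(fst \<circ> p) (Suc k) \<noteq> (fst \<circ> p) k"
      using p[of k] by (auto simp: supp_row_def split: prod.splits)
    show "(snd \<circ> p \<circ> Suc) (Suc k) \<noteq> (snd \<circ> p \<circ> Suc) k"
      using p[of "Suc k"] by (auto split: prod.splits)
  qed
  with acyclic show False ..
qed

lemma sum_supp_row:
  fixes H :: "'m \<Rightarrow> 'n::finite \<Rightarrow> 'r::ring_1"
  shows "(\<Sum>i\<in>supp_row H j. c i * H j i) = (\<Sum>i\<in>UNIV. c i * H j i)"
  by (rule sum.mono_neutral_left) (auto simp: supp_row_def)

lemma project_in_local_code_iff:
  fixes H :: "'m \<Rightarrow> 'n::finite \<Rightarrow> 'r::ring_1"
  shows "project (supp_row H j) c \<in> local_code H j \<longleftrightarrow> (\<Sum>i\<in>UNIV. c i * H j i) = 0"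
proof -
  have "(\<Sum>i\<in>supp_row H j. project (supp_row H j) c i * H j i) = (\<Sum>i\<in>UNIV. c i * H j i)"
    unfolding sum_supp_row[symmetric] by (intro sum.cong refl) (simp add: project_def)
  then show ?thesis by (auto simp: local_code_def project_def)
qed

lemma code_iff_local_codes:
  fixes H :: "'m \<Rightarrow> 'n::finite \<Rightarrow> 'r::ring_1"
  shows "c \<in> code H \<longleftrightarrow> (\<forall>j. project (supp_row H j) c \<in> local_code H j)"
  by (simp add: code_def project_in_local_code_iff)

lemma convex_polytope_Qbar:
  fixes H :: "'m \<Rightarrow> 'n::finite \<Rightarrow> 'r::{ring_1,finite}"
  shows "convex (polytope_Qbar H)"
  unfolding convex_def
proof (intro ballI allI impI)
  fix f g :: "real ^ ('n \<times> 'r)" and u v :: real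
  assume "f \<in> polytope_Qbar H" "g \<in> polytope_Qbar H" and uv: "0 \<le> u" "0 \<le> v" "u + v = 1"
  then obtain wf wg where wf: "(f, wf) \<in> polytope_Q H" and wg: "(g, wg) \<in> polytope_Q H"
    by (auto simp: polytope_Qbar_def)
  have "(u *\<^sub>R f + v *\<^sub>R g, \<lambda>j b. u * wf j b + v * wg j b) \<in> polytope_Q H"
    using wf wg uv
    by (auto simp: polytope_Q_def sum.distrib simp flip: sum_distrib_left intro!: add_nonneg_nonneg)
  then show "u *\<^sub>R f + v *\<^sub>R g \<in> polytope_Qbar H" by (auto simp: polytope_Qbar_def)
qed

lemma Xi_in_polytope_Qbar:
  assumes "c \<in> code H"
  shows "Xi c \<in> polytope_Qbar H"
proof -
  let ?w = "\<lambda>j b. if b = project (supp_row H j) c then 1 else 0 :: real"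
  have lc: "project (supp_row H j) c \<in> local_code H j" for j
    using assms by (simp add: code_iff_local_codes)
  have "(Xi c, ?w) \<in> polytope_Q H"
    using lc by (auto simp: polytope_Q_def Xi_def project_def sum.delta')
  then show ?thesis by (auto simp: polytope_Qbar_def)
qed

definition local_weight :: "('m \<Rightarrow> 'n::finite \<Rightarrow> 'r::ring_1) \<Rightarrow> ('m \<Rightarrow> ('n \<Rightarrow> 'r) \<Rightarrow> real)
      \<Rightarrow> 'm \<Rightarrow> ('n \<Rightarrow> 'r) \<Rightarrow> real" where
  "local_weight H w j b = (if b \<in> local_code H j then w j b else 0)"

lemma supported_on_local_weight: "supported_on (supp_row H j) (local_weight H w j)"
  by (auto simp: supported_on_def local_weight_def local_code_def project_def fun_eq_iff)

context
  fixes H :: "'m::finite \<Rightarrow> 'n::finite \<Rightarrow> 'r::{ring_1,finite}"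
    and f :: "real ^ ('n \<times> 'r)" and w :: "'m \<Rightarrow> ('n \<Rightarrow> 'r) \<Rightarrow> real"
  assumes fw: "(f, w) \<in> polytope_Q H"
begin

lemma local_weight_nonneg: "0 \<le> local_weight H w j b"
  using fw by (simp add: local_weight_def polytope_Q_def)

lemma sum_local_weight: "sum (local_weight H w j) UNIV = 1"
  using fw by (simp add: local_weight_def polytope_Q_def sum.If_cases)

lemma value_mass_local_weight:
  assumes "i \<in> supp_row H j" and "\<alpha> \<noteq> 0"
  shows "(\<Sum>b\<in>UNIV. if b i = \<alpha> then local_weight H w j b else 0) = f $ (i, \<alpha>)"
proof -
  have "(\<Sum>b\<in>UNIV. if b i = \<alpha> then local_weight H w j b else 0)
      = (\<Sum>b\<in>UNIV. if b \<in> {b \<in> local_code H j. b i = \<alpha>} then w j b else 0)"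
    by (intro sum.cong) (auto simp: local_weight_def)
  also have "\<dots> = f $ (i, \<alpha>)"
    using fw assms by (simp add: sum.If_cases polytope_Q_def)
  finally show ?thesis .
qed

lemma marginal_singleton_local_weight:
  assumes "i \<in> supp_row H j" and "i \<in> supp_row H j'"
  shows "marginal {i} (local_weight H w j) = marginal {i} (local_weight H w j')"
  using assms by (intro marginal_singleton_eqI) (simp_all add: sum_local_weight value_mass_local_weight)

end

lemma in_code_if_joint_nonzero:
  fixes H :: "'m \<Rightarrow> 'n::finite \<Rightarrow> 'r::{ring_1,finite}"
  assumes nonneg: "\<And>c. 0 \<le> P c" and marg: "\<And>j. marginal (supp_row H j) P = local_weight H w j"
    and "P c \<noteq> 0"
  shows "c \<in> code H"
  unfolding code_iff_local_codes
proof
  fix j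
  have "0 < P c" using nonneg[of c] \<open>P c \<noteq> 0\<close> by simp
  also have "\<dots> \<le> marginal (supp_row H j) P (project (supp_row H j) c)"
    by (rule le_marginal_project[OF nonneg])
  also have "\<dots> = local_weight H w j (project (supp_row H j) c)"
    by (simp add: marg)
  finally show "project (supp_row H j) c \<in> local_code H j"
    by (simp add: local_weight_def split: if_splits)
qed

lemma sum_joint_Xi_eq:
  fixes H :: "'m::finite \<Rightarrow> 'n::finite \<Rightarrow> 'r::{ring_1,finite}"
  assumes fw: "(f, w) \<in> polytope_Q H" and connected: "graph_connected (tanner_adj H)"
    and marg: "\<And>j. marginal (supp_row H j) P = local_weight H w j"
  shows "(\<Sum>c\<in>UNIV. P c *\<^sub>R Xi c) = f"
  unfolding vec_eq_iff
proof (clarify)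
  fix i and \<alpha> :: 'r
  show "(\<Sum>c\<in>UNIV. P c *\<^sub>R Xi c) $ (i, \<alpha>) = f $ (i, \<alpha>)"
  proof (cases "\<alpha> = 0")
    case True
    then show ?thesis using fw by (simp add: Xi_def polytope_Q_def)
  next
    case False
    obtain j where j: "i \<in> supp_row H j"
      using tanner_connected_column_nonzero[OF connected] by (auto simp: supp_row_def)
    have "f $ (i, \<alpha>) = (\<Sum>b\<in>UNIV. if b i = \<alpha> then marginal (supp_row H j) P b else 0)"
      unfolding marg by (rule value_mass_local_weight[OF fw j False, symmetric])
    also have "\<dots> = (\<Sum>c\<in>UNIV. if c i = \<alpha> then P c else 0)"
      by (rule value_mass_marginal[OF j])
    finally show ?thesis
      using False by (simp add: Xi_def if_distrib cong: if_cong)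
  qed
qed

lemma polytope_Qbar_subset_convex_hull:
  fixes H :: "'m::finite \<Rightarrow> 'n::finite \<Rightarrow> 'r::{ring_1,finite}"
  assumes tree: "graph_is_tree (tanner_adj H)" and "f \<in> polytope_Qbar H"
  shows "f \<in> convex hull (Xi ` code H)"
proof -
  obtain w where fw: "(f, w) \<in> polytope_Q H"
    using \<open>f \<in> polytope_Qbar H\<close> by (auto simp: polytope_Qbar_def)
  have connected: "graph_connected (tanner_adj H)" and acyclic: "\<not> graph_has_cycle (tanner_adj H)"
    using tree by (auto simp: graph_is_tree_def)
  have leaf: "\<exists>j\<in>J. card (supp_row H j \<inter> (\<Union>k\<in>J - {j}. supp_row H k)) \<le> 1"
    if "finite J" and "J \<noteq> {}" for J
    by (rule acyclic_tanner_leaf_check[OF acyclic \<open>J \<noteq> {}\<close>])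
  obtain P where P0: "\<forall>c. 0 \<le> P c" and P1: "sum P UNIV = 1"
    and marg: "\<forall>j\<in>UNIV. marginal (supp_row H j) P = local_weight H w j"
    using joint_distribution_exists[OF local_weight_nonneg[OF fw] supported_on_local_weight
        sum_local_weight[OF fw] marginal_singleton_local_weight[OF fw] leaf finite]
    by blast
  have vanish: "P c = 0" if "c \<notin> code H" for c
    using in_code_if_joint_nonzero[of P H w c] P0 marg that by auto
  have "f = (\<Sum>c\<in>UNIV. P c *\<^sub>R Xi c)"
    using sum_joint_Xi_eq[OF fw connected] marg by simp
  also have "\<dots> = (\<Sum>c\<in>code H. P c *\<^sub>R Xi c)"
    using vanish by (intro sum.mono_neutral_right) auto
  also have "\<dots> \<in> convex hull (Xi ` code H)"
  proof (rule convex_sum)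
    show "sum P (code H) = 1"
      using P1 vanish sum.mono_neutral_right[of UNIV "code H" P] by simp
  qed (use P0 in \<open>auto intro: hull_inc\<close>)
  finally show ?thesis .
qed

theorem proposition4:
  fixes H :: "'m::finite \<Rightarrow> 'n::finite \<Rightarrow> 'r::{ring_1,finite}"
  assumes "graph_is_tree (tanner_adj H)"
  shows "polytope_Qbar H = convex hull (Xi ` code H)"
proof
  show "polytope_Qbar H \<subseteq> convex hull (Xi ` code H)"
    using polytope_Qbar_subset_convex_hull[OF assms] by blast
  show "convex hull (Xi ` code H) \<subseteq> polytope_Qbar H"
    by (rule hull_minimal) (auto intro: Xi_in_polytope_Qbar convex_polytope_Qbar)
qed

end
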